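(* Let $\Gamma$ be a MaxSAT instance encoded with blocking variables $b_1,\dots,b_m$, with $\mathrm{cost}(\Gamma)=k$. Then there is a derivation in the cost-SPR calculus from $\Gamma$ of the unit clauses $b_{i_1},\dots,b_{i_k}$ for some $k$ distinct indices $i_1,\dots,i_k$ and of all unit clauses $\lnot b_j$ for $j\notin\{i_1,\dots,i_k\}$.
   Context: Literals, clauses, CNFs (multisets of clauses), $\mathrm{Var}(\Gamma)$. A substitution $\sigma$ maps each variable to $0$, $1$ or a literal, extended by $\sigma(\lnot x)=\lnot\sigma(x)$, $\sigma(0)=0$, $\sigma(1)=1$; $(\sigma\circ\tau)(x)=\sigma(\tau(x))$. A (partial) assignment has $\sigma(x)\in\{0,1,x\}$; its domain is $\sigma^{-1}(\{0,1\})$; total means all variables get Boolean values. $C{\upharpoonright}_\sigma$: apply $\sigma$ to each literal and simplify; $\sigma\models C$ if the result is $1$ or tautological; $\Gamma{\upharpoonright}_\sigma$ is the multiset of $C{\upharpoonright}_\sigma\neq1$ for $C\in\Gamma$. $\lnot C$ is the partial assignment falsifying all literals of $C$; $\tau\supseteq\rho$ means $\tau$ extends $\rho$. $\Gamma\vdash_1 C$ means unit propagation on $\Gamma{\upharpoonright}_{\lnot C}$ derives the empty clause; $\Gamma\vdash_1\Delta$ means $\Gamma\vdash_1 D$ for all $D\in\Delta$. A MaxSAT instance encoded with blocking variables is a CNF $\Gamma=H\cup\{C_1\lor b_1,\dots,C_m\lor b_m\}$ with distinct fresh variables $b_i$ (blocking variables). $\mathrm{cost}(\alpha)=\sum_i\alpha(b_i)$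 for total $\alpha$; $\mathrm{cost}(\Gamma)=\min\{\mathrm{cost}(\alpha):\alpha\models\Gamma\}$. A clause $C$ is cost-SR w.r.t. $\Gamma$ via $\sigma$ if (1) $\Gamma{\upharpoonright}_{\lnot C}\vdash_1(\Gamma\cup\{C\}){\upharpoonright}_\sigma$ and (2) $\mathrm{cost}(\tau\circ\sigma)\le\mathrm{cost}(\tau)$ for all total $\tau\supseteq\lnot C$. It is cost-SPR if such a $\sigma$ exists that is a partial assignment with the same domain as $\lnot C$. A derivation in the cost-SPR calculus from $\Gamma$ is a sequence $D_1,\dots,D_t$ where each $D_i$ is in $\Gamma$, or follows from earlier clauses by weakening or resolution, or is cost-SPR w.r.t. $\Gamma\cup\{D_1,\dots,D_{i-1}\}$ with $\mathrm{Var}(D_i)\subseteq\mathrm{Var}(\Gamma)$. *)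

theory Defs
  imports Main "HOL-Library.Multiset"
begin

datatype 'v lit = Pos 'v | Neg 'v

fun neg_lit :: "'v lit \<Rightarrow> 'v lit" where
  "neg_lit (Pos x) = Neg x"
| "neg_lit (Neg x) = Pos x"

fun lvar :: "'v lit \<Rightarrow> 'v" where
  "lvar (Pos x) = x"
| "lvar (Neg x) = x"

type_synonym 'v clause = "'v lit set"
type_synonym 'v cnf = "'v clause multiset"

definition vars :: "'v clause \<Rightarrow> 'v set" where
  "vars C = lvar ` C"

definition vars_cnf :: "'v cnf \<Rightarrow> 'v set" where
  "vars_cnf \<Gamma> = (\<Union>C\<in>set_mset \<Gamma>. vars C)"

definition tautological :: "'v clause \<Rightarrow> bool" where
  "tautological C \<longleftrightarrow> (\<exists>x. Pos x \<in> C \<and> Neg x \<in> C)"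

datatype 'v sval = Cst bool | Lt "'v lit"

type_synonym 'v subst = "'v \<Rightarrow> 'v sval"

fun neg_sval :: "'v sval \<Rightarrow> 'v sval" where
  "neg_sval (Cst b) = Cst (\<not> b)"
| "neg_sval (Lt l) = Lt (neg_lit l)"

fun slit :: "'v subst \<Rightarrow> 'v lit \<Rightarrow> 'v sval" where
  "slit \<sigma> (Pos x) = \<sigma> x"
| "slit \<sigma> (Neg x) = neg_sval (\<sigma> x)"

fun ssval :: "'v subst \<Rightarrow> 'v sval \<Rightarrow> 'v sval" where
  "ssval \<sigma> (Cst b) = Cst b"
| "ssval \<sigma> (Lt l) = slit \<sigma> l"

definition scomp :: "'v subst \<Rightarrow> 'v subst \<Rightarrow> 'v subst" where
  "scomp \<sigma> \<tau> = (\<lambda>x. ssval \<sigma> (\<tau> x))"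

definition is_pa :: "'v subst \<Rightarrow> bool" where
  "is_pa \<sigma> \<longleftrightarrow> (\<forall>x. \<sigma> x \<in> {Cst False, Cst True, Lt (Pos x)})"

definition sdom :: "'v subst \<Rightarrow> 'v set" where
  "sdom \<sigma> = {x. \<exists>b. \<sigma> x = Cst b}"

definition total :: "'v subst \<Rightarrow> bool" where
  "total \<sigma> \<longleftrightarrow> is_pa \<sigma> \<and> (\<forall>x. \<exists>b. \<sigma> x = Cst b)"

definition extends :: "'v subst \<Rightarrow> 'v subst \<Rightarrow> bool" where
  "extends \<tau> \<rho> \<longleftrightarrow> (\<forall>x b. \<rho> x = Cst b \<longrightarrow> \<tau> x = Cst b)"

text \<open>Restriction of a clause: None represents 1 (satisfied, or tautological
  after simplification); Some D is the simplified clause.\<close>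
definition clause_restr :: "'v subst \<Rightarrow> 'v clause \<Rightarrow> 'v clause option" where
  "clause_restr \<sigma> C =
     (if Cst True \<in> slit \<sigma> ` C
         \<or> (\<exists>l. Lt l \<in> slit \<sigma> ` C \<and> Lt (neg_lit l) \<in> slit \<sigma> ` C)
      then None
      else Some {l. Lt l \<in> slit \<sigma> ` C})"

definition models :: "'v subst \<Rightarrow> 'v clause \<Rightarrow> bool" where
  "models \<sigma> C \<longleftrightarrow> clause_restr \<sigma> C = None"

definition models_cnf :: "'v subst \<Rightarrow> 'v cnf \<Rightarrow> bool" where
  "models_cnf \<sigma> \<Gamma> \<longleftrightarrow> (\<forall>C\<in>#\<Gamma>. models \<sigma> C)"

definition cnf_restr :: "'v subst \<Rightarrow> 'v cnf \<Rightarrow> 'v cnf" where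
  "cnf_restr \<sigma> \<Gamma> =
     image_mset (\<lambda>C. the (clause_restr \<sigma> C)) (filter_mset (\<lambda>C. \<not> models \<sigma> C) \<Gamma>)"

text \<open>The partial assignment falsifying all literals of C (C non-tautological).\<close>
definition neg_clause :: "'v clause \<Rightarrow> 'v subst" where
  "neg_clause C = (\<lambda>x. if Pos x \<in> C then Cst False
                        else if Neg x \<in> C then Cst True else Lt (Pos x))"

definition unit_asg :: "'v lit \<Rightarrow> 'v subst" where
  "unit_asg l = neg_clause {neg_lit l}"

inductive up_refutes :: "'v cnf \<Rightarrow> bool" where
  empty: "{} \<in># F \<Longrightarrow> up_refutes F"
| unit: "{l} \<in># F \<Longrightarrow> up_refutes (cnf_restr (unit_asg l) F) \<Longrightarrow> up_refutes F"

definition implies1 :: "'v cnf \<Rightarrow> 'v clause \<Rightarrow> bool" where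
  "implies1 \<Gamma> C \<longleftrightarrow> up_refutes (cnf_restr (neg_clause C) \<Gamma>)"

definition implies1_cnf :: "'v cnf \<Rightarrow> 'v cnf \<Rightarrow> bool" where
  "implies1_cnf \<Gamma> \<Delta> \<longleftrightarrow> (\<forall>D\<in>#\<Delta>. implies1 \<Gamma> D)"

definition maxsat_instance ::
  "'v cnf \<Rightarrow> (nat \<Rightarrow> 'v clause) \<Rightarrow> (nat \<Rightarrow> 'v) \<Rightarrow> nat \<Rightarrow> 'v cnf \<Rightarrow> bool" where
  "maxsat_instance H Cs b m \<Gamma> \<longleftrightarrow>
     \<Gamma> = H + mset (map (\<lambda>i. insert (Pos (b i)) (Cs i)) [1..<m+1])
     \<and> (\<forall>C\<in>#H. finite C) \<and> (\<forall>i\<in>{1..m}. finite (Cs i))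
     \<and> inj_on b {1..m}
     \<and> (\<forall>i\<in>{1..m}. b i \<notin> vars_cnf H \<and> (\<forall>j\<in>{1..m}. b i \<notin> vars (Cs j)))"

definition cost :: "(nat \<Rightarrow> 'v) \<Rightarrow> nat \<Rightarrow> 'v subst \<Rightarrow> nat" where
  "cost b m \<alpha> = (\<Sum>i=1..m. if \<alpha> (b i) = Cst True then 1 else 0)"

definition cnf_cost :: "(nat \<Rightarrow> 'v) \<Rightarrow> nat \<Rightarrow> 'v cnf \<Rightarrow> nat" where
  "cnf_cost b m \<Gamma> = Min {cost b m \<alpha> | \<alpha>. total \<alpha> \<and> models_cnf \<alpha> \<Gamma>}"

definition cost_sr_via :: "(nat \<Rightarrow> 'v) \<Rightarrow> nat \<Rightarrow> 'v cnf \<Rightarrow> 'v clause \<Rightarrow> 'v subst \<Rightarrow> bool" where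
  "cost_sr_via b m \<Gamma> C \<sigma> \<longleftrightarrow>
     \<not> tautological C
     \<and> implies1_cnf (cnf_restr (neg_clause C) \<Gamma>) (cnf_restr \<sigma> (add_mset C \<Gamma>))
     \<and> (\<forall>\<tau>. total \<tau> \<and> extends \<tau> (neg_clause C) \<longrightarrow> cost b m (scomp \<tau> \<sigma>) \<le> cost b m \<tau>)"

definition cost_spr :: "(nat \<Rightarrow> 'v) \<Rightarrow> nat \<Rightarrow> 'v cnf \<Rightarrow> 'v clause \<Rightarrow> bool" where
  "cost_spr b m \<Gamma> C \<longleftrightarrow>
     (\<exists>\<sigma>. is_pa \<sigma> \<and> sdom \<sigma> = sdom (neg_clause C) \<and> cost_sr_via b m \<Gamma> C \<sigma>)"

definition resolvent :: "'v clause \<Rightarrow> 'v clause \<Rightarrow> 'v clause \<Rightarrow> bool" where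
  "resolvent C1 C2 D \<longleftrightarrow>
     (\<exists>x. Pos x \<in> C1 \<and> Neg x \<in> C2 \<and> D = (C1 - {Pos x}) \<union> (C2 - {Neg x}))"

definition deriv_step ::
  "(nat \<Rightarrow> 'v) \<Rightarrow> nat \<Rightarrow> 'v cnf \<Rightarrow> 'v clause list \<Rightarrow> 'v clause \<Rightarrow> bool" where
  "deriv_step b m \<Gamma> prev D \<longleftrightarrow>
     D \<in># \<Gamma>
     \<or> (finite D \<and> (\<exists>D'\<in>set prev. D' \<subseteq> D))
     \<or> (\<exists>C1\<in>set prev. \<exists>C2\<in>set prev. resolvent C1 C2 D)
     \<or> (cost_spr b m (\<Gamma> + mset prev) D \<and> vars D \<subseteq> vars_cnf \<Gamma>)"

definition cost_spr_derivation ::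
  "(nat \<Rightarrow> 'v) \<Rightarrow> nat \<Rightarrow> 'v cnf \<Rightarrow> 'v clause list \<Rightarrow> bool" where
  "cost_spr_derivation b m \<Gamma> ds \<longleftrightarrow>
     (\<forall>i<length ds. deriv_step b m \<Gamma> (take i ds) (ds ! i))"

end

theory Submission
  imports Defs
begin

text \<open>Fix an optimal model \<open>a\<close> of \<open>\<Gamma>\<close> and let \<open>V\<close> be the variables of \<open>\<Gamma>\<close>. For every
  other assignment \<open>\<beta>\<close> of \<open>V\<close>, the clause over \<open>V\<close> excluding \<open>\<beta>\<close> can be added: if \<open>\<beta>\<close>
  falsifies a clause of \<open>\<Gamma>\<close>, it is a weakening of that clause; otherwise \<open>\<beta>\<close> costs at least
  as much as \<open>a\<close>, and the clause is cost-SPR with witness \<open>a\<close> restricted to \<open>V\<close>. That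
  witness satisfies \<open>\<Gamma>\<close>, every excluding clause and hence everything derived so far, so
  the unit-propagation condition holds vacuously. Resolving the excluding clauses one
  variable at a time leaves the unit clauses agreeing with \<open>a\<close>; on the blocking variables
  these are \<open>b\<^sub>i\<close> for the \<open>k\<close> indices with \<open>a(b\<^sub>i)\<close> true and \<open>\<not>b\<^sub>j\<close> for the others.\<close>

section \<open>Total assignments as Boolean functions\<close>

fun litval :: "('v \<Rightarrow> bool) \<Rightarrow> 'v lit \<Rightarrow> bool" where
  "litval \<beta> (Pos x) = \<beta> x"
| "litval \<beta> (Neg x) = (\<not> \<beta> x)"

lemma slit_Cst: "slit (\<lambda>x. Cst (\<beta> x)) l = Cst (litval \<beta> l)"
  by (cases l) auto

lemma models_Cst_iff: "models (\<lambda>x. Cst (\<beta> x)) C \<longleftrightarrow> (\<exists>l\<in>C. litval \<beta> l)"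
  by (auto simp: models_def clause_restr_def slit_Cst)

lemma models_cnf_Cst_iff:
  "models_cnf (\<lambda>x. Cst (\<beta> x)) \<Gamma> \<longleftrightarrow> (\<forall>C\<in>#\<Gamma>. \<exists>l\<in>C. litval \<beta> l)"
  by (simp add: models_cnf_def models_Cst_iff)

lemma true_lit_in_vars_cnf:
  assumes "models_cnf (\<lambda>x. Cst (a x)) \<Gamma>" "G \<in># \<Gamma>"
  shows "\<exists>l\<in>G. lvar l \<in> vars_cnf \<Gamma> \<and> litval a l"
proof -
  from assms obtain l where "l \<in> G" "litval a l"
    by (auto simp: models_cnf_Cst_iff)
  then show ?thesis
    using assms(2) by (auto simp: vars_cnf_def vars_def)
qed

lemma total_iff_Cst: "total \<alpha> \<longleftrightarrow> (\<exists>\<beta>. \<alpha> = (\<lambda>x. Cst (\<beta> x)))"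
proof
  assume "total \<alpha>"
  then have "\<alpha> x = Cst (\<alpha> x = Cst True)" for x
    unfolding total_def by (metis (full_types))
  then show "\<exists>\<beta>. \<alpha> = (\<lambda>x. Cst (\<beta> x))"
    by (intro exI[of _ "\<lambda>x. \<alpha> x = Cst True"] ext)
qed (auto simp: total_def is_pa_def)

lemma models_if_true_lit: "l \<in> C \<Longrightarrow> slit \<sigma> l = Cst True \<Longrightarrow> models \<sigma> C"
  unfolding models_def clause_restr_def by force

lemma cost_cong: "(\<And>i. i \<in> {1..m} \<Longrightarrow> \<alpha> (b i) = \<alpha>' (b i)) \<Longrightarrow> cost b m \<alpha> = cost b m \<alpha>'"
  unfolding cost_def by (rule sum.cong) auto

lemma cost_le: "cost b m \<alpha> \<le> m"
  unfolding cost_def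
  using sum_bounded_above[of "{1..m}" "\<lambda>i. if \<alpha> (b i) = Cst True then 1 else (0::nat)" 1]
  by auto

lemma cost_Cst: "cost b m (\<lambda>x. Cst (\<beta> x)) = card {i\<in>{1..m}. \<beta> (b i)}"
  unfolding cost_def by (simp add: sum.If_cases Int_def conj_commute)

lemma cnf_cost_attained:
  assumes "\<exists>\<alpha>. total \<alpha> \<and> models_cnf \<alpha> \<Gamma>" and "cnf_cost b m \<Gamma> = k"
  obtains a where "models_cnf (\<lambda>x. Cst (a x)) \<Gamma>"
    and "cost b m (\<lambda>x. Cst (a x)) = k"
    and "\<And>\<beta>. models_cnf (\<lambda>x. Cst (\<beta> x)) \<Gamma> \<Longrightarrow> k \<le> cost b m (\<lambda>x. Cst (\<beta> x))"
proof -
  let ?costs = "{cost b m \<alpha> | \<alpha>. total \<alpha> \<and> models_cnf \<alpha> \<Gamma>}"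
  have fin: "finite ?costs"
    by (rule finite_subset[of _ "{..m}"]) (auto simp: cost_le)
  have "?costs \<noteq> {}"
    using assms(1) by auto
  then have "k \<in> ?costs"
    using Min_in[OF fin] assms(2) unfolding cnf_cost_def by blast
  then obtain \<alpha> where \<alpha>: "total \<alpha>" "models_cnf \<alpha> \<Gamma>" "cost b m \<alpha> = k"
    by blast
  moreover from \<alpha>(1) obtain a where "\<alpha> = (\<lambda>x. Cst (a x))"
    unfolding total_iff_Cst by blast
  ultimately have "models_cnf (\<lambda>x. Cst (a x)) \<Gamma>" "cost b m (\<lambda>x. Cst (a x)) = k"
    by simp_all
  moreover have "k \<le> cost b m (\<lambda>x. Cst (\<beta> x))" if "models_cnf (\<lambda>x. Cst (\<beta> x)) \<Gamma>" for \<beta>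
    using Min_le[OF fin] that assms(2) total_iff_Cst unfolding cnf_cost_def by blast
  ultimately show thesis
    using that by blast
qed

section \<open>Clauses excluding a single assignment\<close>

definition excluding_clause :: "'v set \<Rightarrow> ('v \<Rightarrow> bool) \<Rightarrow> 'v clause" where
  "excluding_clause A \<beta> = {l. lvar l \<in> A \<and> \<not> litval \<beta> l}"

lemma excluding_clause_subset: "excluding_clause A \<beta> \<subseteq> Pos ` A \<union> Neg ` A"
proof
  fix l assume "l \<in> excluding_clause A \<beta>"
  then show "l \<in> Pos ` A \<union> Neg ` A"
    by (cases l) (auto simp: excluding_clause_def)
qed

lemma finite_excluding_clause: "finite A \<Longrightarrow> finite (excluding_clause A \<beta>)"
  using excluding_clause_subset by (rule finite_subset) simp

lemma finite_excluding_clauses: "finite A \<Longrightarrow> finite (excluding_clause A ` B)"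
proof (rule finite_subset)
  show "excluding_clause A ` B \<subseteq> Pow (Pos ` A \<union> Neg ` A)"
    using excluding_clause_subset by blast
qed simp

lemma vars_excluding_clause: "vars (excluding_clause A \<beta>) \<subseteq> A"
  by (auto simp: vars_def excluding_clause_def)

lemma not_tautological_excluding_clause: "\<not> tautological (excluding_clause A \<beta>)"
  by (auto simp: tautological_def excluding_clause_def)

lemma neg_clause_excluding_clause:
  "neg_clause (excluding_clause A \<beta>) x = (if x \<in> A then Cst (\<beta> x) else Lt (Pos x))"
  by (auto simp: neg_clause_def excluding_clause_def)

lemma excluding_clause_singleton:
  "excluding_clause {x} (\<lambda>z. \<not> a z) = {if a x then Pos x else Neg x}"
  by (auto simp: excluding_clause_def elim: litval.elims)

lemma true_lit_in_excluding_clause: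
  assumes "\<exists>x\<in>A. \<beta> x \<noteq> a x"
  shows "\<exists>l\<in>excluding_clause A \<beta>. lvar l \<in> A \<and> litval a l"
proof -
  from assms obtain x where "x \<in> A" "\<beta> x \<noteq> a x"
    by blast
  then show ?thesis
    by (intro bexI[of _ "if a x then Pos x else Neg x"]) (auto simp: excluding_clause_def)
qed

lemma subset_excluding_clause:
  "vars C \<subseteq> A \<Longrightarrow> \<not> (\<exists>l\<in>C. litval \<beta> l) \<Longrightarrow> C \<subseteq> excluding_clause A \<beta>"
  by (auto simp: vars_def excluding_clause_def)

lemma resolvent_excluding_clause:
  assumes "y \<in> A"
  shows "resolvent (excluding_clause A (\<beta>(y := False))) (excluding_clause A (\<beta>(y := True)))
           (excluding_clause (A - {y}) \<beta>)"
  unfolding resolvent_def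
proof (intro exI[of _ y] conjI)
  show "Pos y \<in> excluding_clause A (\<beta>(y := False))" "Neg y \<in> excluding_clause A (\<beta>(y := True))"
    using assms by (auto simp: excluding_clause_def)
  show "excluding_clause (A - {y}) \<beta> =
      (excluding_clause A (\<beta>(y := False)) - {Pos y}) \<union> (excluding_clause A (\<beta>(y := True)) - {Neg y})"
  proof (rule set_eqI)
    fix l
    show "l \<in> excluding_clause (A - {y}) \<beta> \<longleftrightarrow>
        l \<in> (excluding_clause A (\<beta>(y := False)) - {Pos y}) \<union> (excluding_clause A (\<beta>(y := True)) - {Neg y})"
      by (cases l) (auto simp: excluding_clause_def)
  qed
qed

section \<open>Resolution\<close>

inductive resolution_derivable :: "'v clause set \<Rightarrow> 'v clause \<Rightarrow> bool" for S where
  base: "D \<in> S \<Longrightarrow> resolution_derivable S D"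
| resolve: "resolution_derivable S C1 \<Longrightarrow> resolution_derivable S C2 \<Longrightarrow> resolvent C1 C2 D
    \<Longrightarrow> resolution_derivable S D"

lemma resolution_derivable_mono:
  "resolution_derivable S D \<Longrightarrow> S \<subseteq> S' \<Longrightarrow> resolution_derivable S' D"
  by (induction rule: resolution_derivable.induct) (auto intro: resolution_derivable.intros)

definition excludes_all_but :: "'v clause set \<Rightarrow> ('v \<Rightarrow> bool) \<Rightarrow> 'v set \<Rightarrow> bool" where
  "excludes_all_but S a A \<longleftrightarrow>
     (\<forall>\<beta>. (\<exists>x\<in>A. \<beta> x \<noteq> a x) \<longrightarrow> resolution_derivable S (excluding_clause A \<beta>))"

lemma excludes_all_but_base:
  "(\<And>\<beta>. \<exists>x\<in>A. \<beta> x \<noteq> a x \<Longrightarrow> excluding_clause A \<beta> \<in> S) \<Longrightarrow> excludes_all_but S a A"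
  unfolding excludes_all_but_def by (auto intro: resolution_derivable.base)

lemma excludes_all_but_remove:
  assumes "excludes_all_but S a A"
  shows "excludes_all_but S a (A - {y})"
proof (cases "y \<in> A")
  case True
  show ?thesis
    unfolding excludes_all_but_def
  proof (intro allI impI)
    fix \<beta> assume "\<exists>x\<in>A - {y}. \<beta> x \<noteq> a x"
    then have "\<exists>x\<in>A. (\<beta>(y := c)) x \<noteq> a x" for c
      by auto
    then have resolved: "resolution_derivable S (excluding_clause A (\<beta>(y := c)))" for c
      using assms unfolding excludes_all_but_def by blast
    show "resolution_derivable S (excluding_clause (A - {y}) \<beta>)"
      by (rule resolution_derivable.resolve[OF resolved resolved resolvent_excluding_clause[OF True]])
  qed
qed (use assms in simp)

lemma excludes_all_but_subset:
  assumes "finite A" "A' \<subseteq> A" "excludes_all_but S a A"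
  shows "excludes_all_but S a A'"
proof -
  have "excludes_all_but S a (A' \<union> B) \<Longrightarrow> excludes_all_but S a A'" if "finite B" for B
    using that
  proof (induction B rule: finite_induct)
    case (insert y B)
    have "excludes_all_but S a ((A' \<union> insert y B) - {y})"
      by (rule excludes_all_but_remove[OF insert.prems])
    moreover have "(A' \<union> insert y B) - {y} = A' \<union> B" if "y \<notin> A'"
      using that insert.hyps by auto
    ultimately show ?case
      using insert by (cases "y \<in> A'") (simp_all add: insert_absorb)
  qed simp
  moreover have "A' \<union> (A - A') = A"
    using assms(2) by auto
  ultimately show ?thesis
    using assms(1,3) finite_Diff by metis
qed

lemma excludes_all_but_unit:
  assumes "finite A" "x \<in> A" "excludes_all_but S a A"
  shows "resolution_derivable S {if a x then Pos x else Neg x}"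
proof -
  have "excludes_all_but S a {x}"
    using excludes_all_but_subset[OF assms(1) _ assms(3)] assms(2) by simp
  then have "resolution_derivable S (excluding_clause {x} (\<lambda>z. \<not> a z))"
    unfolding excludes_all_but_def by simp
  then show ?thesis
    by (simp add: excluding_clause_singleton)
qed

lemma cost_spr_derivation_snoc:
  "cost_spr_derivation b m \<Gamma> (ds @ [D]) \<longleftrightarrow>
     cost_spr_derivation b m \<Gamma> ds \<and> deriv_step b m \<Gamma> ds D"
  unfolding cost_spr_derivation_def by (auto simp: nth_append less_Suc_eq)

lemma cost_spr_derivation_of_clauses:
  assumes "set ds \<subseteq> set_mset \<Gamma>"
  shows "cost_spr_derivation b m \<Gamma> ds"
  unfolding cost_spr_derivation_def deriv_step_def using assms nth_mem by blast

lemma cost_spr_derivation_append: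
  assumes "cost_spr_derivation b m \<Gamma> ds"
    and "\<And>prev D. D \<in> set ds' \<Longrightarrow> set ds \<subseteq> set prev \<Longrightarrow> set prev \<subseteq> set ds \<union> set ds'
           \<Longrightarrow> deriv_step b m \<Gamma> prev D"
  shows "cost_spr_derivation b m \<Gamma> (ds @ ds')"
  using assms(2)
proof (induction ds' rule: rev_induct)
  case (snoc D ds')
  have "cost_spr_derivation b m \<Gamma> (ds @ ds')"
  proof (rule snoc.IH)
    fix prev E
    assume "E \<in> set ds'" "set ds \<subseteq> set prev" "set prev \<subseteq> set ds \<union> set ds'"
    then show "deriv_step b m \<Gamma> prev E"
      using snoc.prems[of E prev] by auto
  qed
  moreover have "deriv_step b m \<Gamma> (ds @ ds') D"
    using snoc.prems[of D "ds @ ds'"] by auto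
  ultimately show ?case
    using cost_spr_derivation_snoc by (metis append_assoc)
qed (simp add: assms(1))

lemma cost_spr_derivation_resolution:
  assumes "resolution_derivable S D"
  shows "cost_spr_derivation b m \<Gamma> ds \<Longrightarrow> S \<subseteq> set ds \<Longrightarrow>
    \<exists>ds'. cost_spr_derivation b m \<Gamma> (ds @ ds') \<and> D \<in> set (ds @ ds')"
  using assms
proof (induction arbitrary: ds rule: resolution_derivable.induct)
  case (base D)
  then show ?case by (intro exI[of _ "[]"]) auto
next
  case (resolve C1 C2 D)
  obtain ds1 where ds1: "cost_spr_derivation b m \<Gamma> (ds @ ds1)" "C1 \<in> set (ds @ ds1)"
    using resolve.IH(1) resolve.prems by blast
  obtain ds2 where ds2: "cost_spr_derivation b m \<Gamma> (ds @ ds1 @ ds2)" "C2 \<in> set (ds @ ds1 @ ds2)"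
    using resolve.IH(2)[of "ds @ ds1"] ds1 resolve.prems by auto
  have "deriv_step b m \<Gamma> (ds @ ds1 @ ds2) D"
    unfolding deriv_step_def using ds1(2) ds2(2) resolve.hyps(3) by auto
  then have "cost_spr_derivation b m \<Gamma> (ds @ ds1 @ ds2 @ [D])"
    using ds2(1) cost_spr_derivation_snoc[of b m \<Gamma> "ds @ ds1 @ ds2" D] by simp
  then show ?case by (intro exI[of _ "ds1 @ ds2 @ [D]"]) auto
qed

lemma cost_spr_derivation_resolution_finite:
  assumes "finite T" "\<And>D. D \<in> T \<Longrightarrow> resolution_derivable (set ds) D"
    and "cost_spr_derivation b m \<Gamma> ds"
  shows "\<exists>ds'. cost_spr_derivation b m \<Gamma> ds' \<and> T \<subseteq> set ds' \<and> set ds \<subseteq> set ds'"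
  using assms
proof (induction T rule: finite_induct)
  case (insert D T)
  then obtain ds' where ds': "cost_spr_derivation b m \<Gamma> ds'" "T \<subseteq> set ds'" "set ds \<subseteq> set ds'"
    by auto
  moreover have "resolution_derivable (set ds') D"
    using insert.prems(1) ds'(3) resolution_derivable_mono by blast
  ultimately obtain ds'' where "cost_spr_derivation b m \<Gamma> (ds' @ ds'')" "D \<in> set (ds' @ ds'')"
    using cost_spr_derivation_resolution by blast
  then show ?case
    using ds' by (intro exI[of _ "ds' @ ds''"]) auto
qed auto

lemma cost_spr_derivation_units:
  assumes "cost_spr_derivation b m \<Gamma> ds" "excludes_all_but (set ds) a A" "finite A" "X \<subseteq> A"
  obtains ds' where "cost_spr_derivation b m \<Gamma> ds'"
    and "\<And>x. x \<in> X \<Longrightarrow> {if a x then Pos x else Neg x} \<in> set ds'"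
proof -
  let ?units = "(\<lambda>x. {if a x then Pos x else Neg x}) ` X"
  have finite: "finite ?units"
    using finite_subset[OF assms(4,3)] by (rule finite_imageI)
  have derivable: "resolution_derivable (set ds) D" if "D \<in> ?units" for D
  proof -
    from that obtain x where "x \<in> X" "D = {if a x then Pos x else Neg x}"
      by blast
    then show ?thesis
      using excludes_all_but_unit[OF assms(3) subsetD[OF assms(4)] assms(2)] by simp
  qed
  obtain ds' where ds': "cost_spr_derivation b m \<Gamma> ds'" "?units \<subseteq> set ds'"
    using cost_spr_derivation_resolution_finite[OF finite derivable assms(1)] by blast
  show thesis
  proof (rule that[OF ds'(1)])
    show "{if a x then Pos x else Neg x} \<in> set ds'" if "x \<in> X" for x
      using ds'(2) that by blast
  qed
qed

section \<open>Cost-SPR excluding clauses\<close>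

lemma cost_spr_excluding_clause:
  assumes sat: "\<And>G. G \<in># \<Gamma> \<Longrightarrow> \<exists>l\<in>G. lvar l \<in> V \<and> litval a l"
    and differ: "\<exists>x\<in>V. \<beta> x \<noteq> a x"
    and blocking: "b ` {1..m} \<subseteq> V"
    and no_better: "cost b m (\<lambda>x. Cst (a x)) \<le> cost b m (\<lambda>x. Cst (\<beta> x))"
  shows "cost_spr b m \<Gamma> (excluding_clause V \<beta>)"
proof -
  let ?D = "excluding_clause V \<beta>"
  define \<sigma> where "\<sigma> x = (if x \<in> V then Cst (a x) else Lt (Pos x))" for x
  have pa: "is_pa \<sigma>"
    unfolding is_pa_def \<sigma>_def by auto
  have dom: "sdom \<sigma> = sdom (neg_clause ?D)"
    unfolding sdom_def neg_clause_excluding_clause \<sigma>_def by auto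
  have models_\<sigma>: "models \<sigma> G" if "\<exists>l\<in>G. lvar l \<in> V \<and> litval a l" for G
  proof -
    from that obtain l where "l \<in> G" "lvar l \<in> V" "litval a l"
      by blast
    moreover from \<open>lvar l \<in> V\<close> have "slit \<sigma> l = Cst (litval a l)"
      by (cases l) (auto simp: \<sigma>_def)
    ultimately show ?thesis
      using models_if_true_lit by metis
  qed
  have "models \<sigma> ?D"
    using models_\<sigma> true_lit_in_excluding_clause[OF differ] .
  then have "cnf_restr \<sigma> (add_mset ?D \<Gamma>) = {#}"
    unfolding cnf_restr_def filter_mset_eq_conv using models_\<sigma> sat by auto
  moreover have "cost b m (scomp \<tau> \<sigma>) \<le> cost b m \<tau>"
    if "total \<tau>" "extends \<tau> (neg_clause ?D)" for \<tau>
  proof -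
    have "cost b m (scomp \<tau> \<sigma>) = cost b m (\<lambda>x. Cst (a x))"
      using blocking by (intro cost_cong) (auto simp: scomp_def \<sigma>_def image_subset_iff)
    moreover have "cost b m \<tau> = cost b m (\<lambda>x. Cst (\<beta> x))"
      using blocking that(2)
      by (intro cost_cong) (auto simp: extends_def neg_clause_excluding_clause image_subset_iff)
    ultimately show ?thesis
      using no_better by simp
  qed
  ultimately show ?thesis
    unfolding cost_spr_def cost_sr_via_def implies1_cnf_def
    using pa dom not_tautological_excluding_clause by (intro exI[of _ \<sigma>]) auto
qed

lemma deriv_step_excluding_clause:
  assumes "b ` {1..m} \<subseteq> vars_cnf \<Gamma>" "finite (vars_cnf \<Gamma>)"
    and "set_mset \<Gamma> \<subseteq> set prev"
    and "\<And>G. G \<in> set prev \<Longrightarrow> \<exists>l\<in>G. lvar l \<in> vars_cnf \<Gamma> \<and> litval a l"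
    and "\<exists>x\<in>vars_cnf \<Gamma>. \<beta> x \<noteq> a x"
    and "models_cnf (\<lambda>x. Cst (\<beta> x)) \<Gamma> \<Longrightarrow>
           cost b m (\<lambda>x. Cst (a x)) \<le> cost b m (\<lambda>x. Cst (\<beta> x))"
  shows "deriv_step b m \<Gamma> prev (excluding_clause (vars_cnf \<Gamma>) \<beta>)"
proof (cases "models_cnf (\<lambda>x. Cst (\<beta> x)) \<Gamma>")
  case True
  have "cost_spr b m (\<Gamma> + mset prev) (excluding_clause (vars_cnf \<Gamma>) \<beta>)"
  proof (rule cost_spr_excluding_clause)
    show "\<exists>l\<in>G. lvar l \<in> vars_cnf \<Gamma> \<and> litval a l" if "G \<in># \<Gamma> + mset prev" for G
      using that assms(3,4) by auto
  qed (use assms(1,5,6) True in simp_all)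
  then show ?thesis
    by (simp add: deriv_step_def vars_excluding_clause)
next
  case False
  then obtain G where G: "G \<in># \<Gamma>" "\<not> (\<exists>l\<in>G. litval \<beta> l)"
    by (auto simp: models_cnf_Cst_iff)
  then have "G \<subseteq> excluding_clause (vars_cnf \<Gamma>) \<beta>"
    by (intro subset_excluding_clause) (auto simp: vars_cnf_def)
  moreover have "G \<in> set prev"
    using G(1) assms(3) by blast
  ultimately show ?thesis
    unfolding deriv_step_def using assms(2) finite_excluding_clause by blast
qed

lemma cost_spr_derivation_excluding_all_but:
  assumes "b ` {1..m} \<subseteq> vars_cnf \<Gamma>" "finite (vars_cnf \<Gamma>)"
    and "models_cnf (\<lambda>x. Cst (a x)) \<Gamma>"
    and "\<And>\<beta>. models_cnf (\<lambda>x. Cst (\<beta> x)) \<Gamma> \<Longrightarrow>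
           cost b m (\<lambda>x. Cst (a x)) \<le> cost b m (\<lambda>x. Cst (\<beta> x))"
  obtains ds where "cost_spr_derivation b m \<Gamma> ds" "excludes_all_but (set ds) a (vars_cnf \<Gamma>)"
proof -
  let ?V = "vars_cnf \<Gamma>"
  define Excl where "Excl = excluding_clause ?V ` {\<beta>. \<exists>x\<in>?V. \<beta> x \<noteq> a x}"
  have "finite Excl"
    unfolding Excl_def by (rule finite_excluding_clauses[OF assms(2)])
  then obtain ex_list where ex_list: "set ex_list = Excl"
    using finite_list by auto
  obtain \<Gamma>_list where \<Gamma>_list: "set \<Gamma>_list = set_mset \<Gamma>"
    using finite_list[OF finite_set_mset[of \<Gamma>]] by blast
  have sat: "\<exists>l\<in>G. lvar l \<in> ?V \<and> litval a l" if "G \<in> set_mset \<Gamma> \<union> Excl" for G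
  proof (cases "G \<in># \<Gamma>")
    case True
    then show ?thesis
      by (rule true_lit_in_vars_cnf[OF assms(3)])
  next
    case False
    with that obtain \<beta> where "G = excluding_clause ?V \<beta>" "\<exists>x\<in>?V. \<beta> x \<noteq> a x"
      unfolding Excl_def by (auto elim!: imageE)
    then show ?thesis
      using true_lit_in_excluding_clause[of ?V \<beta> a] by simp
  qed
  have "cost_spr_derivation b m \<Gamma> (\<Gamma>_list @ ex_list)"
  proof (rule cost_spr_derivation_append)
    show "cost_spr_derivation b m \<Gamma> \<Gamma>_list"
      by (rule cost_spr_derivation_of_clauses) (simp add: \<Gamma>_list)
  next
    fix prev D
    assume "D \<in> set ex_list"
      and prev: "set \<Gamma>_list \<subseteq> set prev" "set prev \<subseteq> set \<Gamma>_list \<union> set ex_list"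
    then obtain \<beta> where \<beta>: "D = excluding_clause ?V \<beta>" "\<exists>x\<in>?V. \<beta> x \<noteq> a x"
      unfolding ex_list Excl_def by blast
    have "\<exists>l\<in>G. lvar l \<in> ?V \<and> litval a l" if "G \<in> set prev" for G
      using sat subsetD[OF prev(2) that] unfolding \<Gamma>_list ex_list by blast
    then show "deriv_step b m \<Gamma> prev D"
      unfolding \<beta>(1) using deriv_step_excluding_clause[OF assms(1,2)] assms(4) prev(1) \<beta>(2)
      unfolding \<Gamma>_list by blast
  qed
  moreover have "excludes_all_but (set (\<Gamma>_list @ ex_list)) a ?V"
    by (rule excludes_all_but_base) (unfold set_append ex_list Excl_def, blast)
  ultimately show thesis
    using that by blast
qed

lemma maxsat_instance_finite_vars:
  assumes "maxsat_instance H Cs b m \<Gamma>"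
  shows "finite (vars_cnf \<Gamma>)"
proof -
  have "finite C" if "C \<in># \<Gamma>" for C
    using assms that unfolding maxsat_instance_def by auto
  then show ?thesis
    unfolding vars_cnf_def vars_def by auto
qed

lemma maxsat_instance_blocking_vars:
  assumes "maxsat_instance H Cs b m \<Gamma>"
  shows "b ` {1..m} \<subseteq> vars_cnf \<Gamma>"
proof
  fix x assume "x \<in> b ` {1..m}"
  then obtain i where i: "i \<in> {1..m}" "x = b i"
    by blast
  let ?soft = "\<lambda>i. insert (Pos (b i)) (Cs i)"
  have "?soft i \<in> set (map ?soft [1..<m+1])"
    unfolding set_map by (rule imageI) (use i(1) in auto)
  moreover have "\<Gamma> = H + mset (map ?soft [1..<m+1])"
    using assms unfolding maxsat_instance_def by (rule conjunct1)
  ultimately have "?soft i \<in># \<Gamma>"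
    by (simp only: union_iff in_multiset_in_set simp_thms)
  then show "x \<in> vars_cnf \<Gamma>"
    unfolding vars_cnf_def vars_def i(2) by (rule UN_I) (rule image_eqI[of _ _ "Pos (b i)"]; simp)
qed

theorem theorem4p3:
  fixes H :: "'v cnf" and Cs :: "nat \<Rightarrow> 'v clause" and b :: "nat \<Rightarrow> 'v"
    and m k :: nat and \<Gamma> :: "'v cnf"
  assumes "maxsat_instance H Cs b m \<Gamma>"
    and "\<exists>\<alpha>. total \<alpha> \<and> models_cnf \<alpha> \<Gamma>"
    and "cnf_cost b m \<Gamma> = k"
  shows "\<exists>ds I. cost_spr_derivation b m \<Gamma> ds \<and> I \<subseteq> {1..m} \<and> card I = k
           \<and> (\<forall>i\<in>I. {Pos (b i)} \<in> set ds)
           \<and> (\<forall>j\<in>{1..m} - I. {Neg (b j)} \<in> set ds)"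
proof -
  let ?V = "vars_cnf \<Gamma>"
  have blocking: "b ` {1..m} \<subseteq> ?V" and finite: "finite ?V"
    using assms(1) maxsat_instance_blocking_vars maxsat_instance_finite_vars by blast+
  obtain a where model: "models_cnf (\<lambda>x. Cst (a x)) \<Gamma>" and cost: "cost b m (\<lambda>x. Cst (a x)) = k"
    and optimal: "\<And>\<beta>. models_cnf (\<lambda>x. Cst (\<beta> x)) \<Gamma> \<Longrightarrow> k \<le> cost b m (\<lambda>x. Cst (\<beta> x))"
    using cnf_cost_attained[OF assms(2,3)] by blast
  obtain ds0 where ds0: "cost_spr_derivation b m \<Gamma> ds0" "excludes_all_but (set ds0) a ?V"
    by (rule cost_spr_derivation_excluding_all_but[OF blocking finite model]) (simp add: cost optimal)
  obtain ds where ds: "cost_spr_derivation b m \<Gamma> ds"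
    and unit: "\<And>x. x \<in> b ` {1..m} \<Longrightarrow> {if a x then Pos x else Neg x} \<in> set ds"
    using cost_spr_derivation_units[OF ds0(1,2) finite blocking] by blast
  let ?I = "{i\<in>{1..m}. a (b i)}"
  show ?thesis
  proof (intro exI[of _ ds] exI[of _ ?I] conjI)
    show "card ?I = k"
      using cost by (simp add: cost_Cst)
    show "\<forall>i\<in>?I. {Pos (b i)} \<in> set ds"
      using unit[OF imageI] by fastforce
    show "\<forall>j\<in>{1..m} - ?I. {Neg (b j)} \<in> set ds"
    proof
      fix j assume "j \<in> {1..m} - ?I"
      then show "{Neg (b j)} \<in> set ds"
        using unit[of "b j"] by simp
    qed
  qed (use ds in auto)
qed

end
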